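(* Let $k\ge 2$, $r,r'\ge1$ be integers, let $P:[r]^k\to\{0,1\}$ and $P':[r']^k\to\{0,1\}$ be $k$-ary predicates, and let $V$ be a finite set with $n=|V|$. Suppose there is a function $f_P:\mathrm{Part}_r(V)\to\mathrm{Part}_{r'}(V^\gamma)$ such that for every weighted directed $k$-uniform hypergraph $H$ on vertex set $V$ and every $\mathcal{A}\in\mathrm{Part}_r(V)$, $$\mathrm{Val}_{H,P}(\mathcal{A})=\mathrm{Val}_{\gamma(H),P'}(f_P(\mathcal{A})),$$ where $\gamma(H)$ is the $k$-partite $k$-fold cover of $H$. Let $H$ be a weighted directed $k$-uniform hypergraph on $V$ and $0<\varepsilon<1$. If there is an $\varepsilon$-$P'$-sparsifier of $\gamma(H)$ with $g(n)$ hyperedges, then there is an $\varepsilon$-$P$-sparsifier of $H$ with $g(n)$ hyperedges.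
   Context: $[r]=\{0,\dots,r-1\}$. A weighted directed $k$-uniform hypergraph $H=(V,E,w)$ has $E$ a set of ordered $k$-tuples of distinct vertices and $w:E\to\mathbb{R}_{>0}$. Its $k$-partite $k$-fold cover is $\gamma(H)=(V^\gamma,E^\gamma,w^\gamma)$ with $V^\gamma=\{v^{(0)},\dots,v^{(k-1)}:v\in V\}$ ($k$ copies of each vertex), $E^\gamma=\{(v_1^{(0)},\dots,v_k^{(k-1)}):(v_1,\dots,v_k)\in E\}$, and $w^\gamma(v_1^{(0)},\dots,v_k^{(k-1)})=w(v_1,\dots,v_k)$; $V^\gamma$ depends only on $V$. $\mathrm{Part}_r(X)$ is the set of ordered $r$-tuples $(A_0,\dots,A_{r-1})$ of pairwise disjoint, possibly empty, subsets of $X$ with union $X$, identified with assignments $A:X\to[r]$ via $A_j=A^{-1}(j)$. For $Q:[s]^k\to\{0,1\}$, a hypergraph $H=(X,E,w)$ and $\mathcal{A}\in\mathrm{Part}_s(X)$ with assignment $A$, $\mathrm{Val}_{H,Q}(\mathcal{A})=\sum_{e\in E}w(e)Q(A(e))$, where $A$ is applied entrywise. An $\varepsilon$-$Q$-sparsifier of $H=(X,E,w)$ is $H_\varepsilon=(X,E_\varepsilon,w_\varepsilon)$ with $E_\varepsilon\subseteq E$, $w_\varepsilon:E_\varepsilon\to\mathbb{R}_{>0}$, such that for every $\mathcal{A}\in\mathrm{Part}_s(X)$, $(1-\varepsilon)\mathrm{Val}_{H,Q}(\mathcal{A})\le\mathrm{Val}_{H_\varepsilon,Q}(\mathcal{A})\le(1+\varepsilon)\mathrm{Val}_{H,Q}(\mathcal{A})$;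 its number of hyperedges is $|E_\varepsilon|$. *)

theory Defs
  imports Complex_Main "HOL-Library.FuncSet"
begin

text \<open>Hyperedges are lists (ordered k-tuples). A weighted directed k-uniform hypergraph
 on vertex set V is given by a set of hyperedges E and a weight function w.\<close>

definition wdhg :: "nat \<Rightarrow> 'a set \<Rightarrow> 'a list set \<Rightarrow> ('a list \<Rightarrow> real) \<Rightarrow> bool" where
  "wdhg k V E w \<longleftrightarrow>
     (\<forall>e\<in>E. length e = k \<and> distinct e \<and> set e \<subseteq> V) \<and> (\<forall>e\<in>E. w e > 0)"

definition Part :: "nat \<Rightarrow> 'a set \<Rightarrow> ('a \<Rightarrow> nat) set" where
  "Part r X = X \<rightarrow>\<^sub>E {..<r}"

definition Val :: "'a list set \<Rightarrow> ('a list \<Rightarrow> real) \<Rightarrow> (nat list \<Rightarrow> bool) \<Rightarrow> ('a \<Rightarrow> nat) \<Rightarrow> real" where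
  "Val E w Q A = (\<Sum>e\<in>E. w e * of_bool (Q (map A e)))"

text \<open>k-partite k-fold cover: vertex v^(i) is (v,i).\<close>
definition cover_vertices :: "nat \<Rightarrow> 'a set \<Rightarrow> ('a \<times> nat) set" where
  "cover_vertices k V = V \<times> {..<k}"

definition cover_edge :: "nat \<Rightarrow> 'a list \<Rightarrow> ('a \<times> nat) list" where
  "cover_edge k e = zip e [0..<k]"

definition cover_edges :: "nat \<Rightarrow> 'a list set \<Rightarrow> ('a \<times> nat) list set" where
  "cover_edges k E = cover_edge k ` E"

definition cover_weight :: "('a list \<Rightarrow> real) \<Rightarrow> ('a \<times> nat) list \<Rightarrow> real" where
  "cover_weight w e' = w (map fst e')"

definition is_sparsifier ::
  "nat \<Rightarrow> (nat list \<Rightarrow> bool) \<Rightarrow> real \<Rightarrow> 'a set \<Rightarrow> 'a list set \<Rightarrow> ('a list \<Rightarrow> real)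
     \<Rightarrow> 'a list set \<Rightarrow> ('a list \<Rightarrow> real) \<Rightarrow> bool" where
  "is_sparsifier s Q eps X E w E' w' \<longleftrightarrow>
     E' \<subseteq> E \<and> (\<forall>e\<in>E'. w' e > 0) \<and>
     (\<forall>A\<in>Part s X. (1 - eps) * Val E w Q A \<le> Val E' w' Q A \<and>
                      Val E' w' Q A \<le> (1 + eps) * Val E w Q A)"

end

theory Submission
  imports Defs
begin

text \<open>Every hyperedge of a sparsifier of the cover \<open>\<gamma>(H)\<close> is the cover of a unique hyperedge
  of \<open>H\<close>, so the sparsifier is \<open>\<gamma>(H\<^sub>\<epsilon>)\<close> for a subhypergraph \<open>H\<^sub>\<epsilon>\<close> of \<open>H\<close> with the same number of
  hyperedges. Since the value-preserving map \<open>f\<^sub>P\<close> works for every hypergraph on \<open>V\<close>, it applies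
  to \<open>H\<close> and to \<open>H\<^sub>\<epsilon>\<close> alike, and the sparsification inequalities for \<open>P'\<close> on the cover become
  those for \<open>P\<close> on \<open>H\<close>.\<close>

lemma map_fst_cover_edge: "length e = k \<Longrightarrow> map fst (cover_edge k e) = e"
  unfolding cover_edge_def by simp

lemma cover_edge_map_fst:
  assumes "\<forall>e\<in>E. length e = k" and "x \<in> cover_edges k E"
  shows "cover_edge k (map fst x) = x" and "map fst x \<in> E"
proof -
  obtain e where e: "e \<in> E" and x: "x = cover_edge k e"
    using assms(2) unfolding cover_edges_def by blast
  then have "map fst x = e"
    using assms(1) map_fst_cover_edge by blast
  then show "cover_edge k (map fst x) = x" and "map fst x \<in> E"
    using e x by simp_all
qed

lemma inj_on_map_fst_cover_edges:
  "\<forall>e\<in>E. length e = k \<Longrightarrow> inj_on (map fst) (cover_edges k E)"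
  by (metis cover_edge_map_fst(1) inj_onI)

lemma cover_edges_image_map_fst:
  assumes "\<forall>e\<in>E. length e = k" and "E' \<subseteq> cover_edges k E"
  shows "cover_edges k (map fst ` E') = E'"
proof -
  have "cover_edges k (map fst ` E') = (\<lambda>x. cover_edge k (map fst x)) ` E'"
    unfolding cover_edges_def image_image ..
  also have "\<dots> = E'"
    using assms(2) cover_edge_map_fst(1)[OF assms(1)]
    by (auto simp: subset_iff intro!: image_cong[where g = id, simplified])
  finally show ?thesis .
qed

lemma Val_cover_weight_comp_cover_edge:
  assumes "\<forall>e\<in>E. length e = k" and "E' \<subseteq> cover_edges k E"
  shows "Val E' (cover_weight (w' \<circ> cover_edge k)) Q B = Val E' w' Q B"
  unfolding Val_def cover_weight_def
  using assms by (intro sum.cong) (auto simp: cover_edge_map_fst(1) subset_iff)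

lemma wdhg_subhypergraph:
  "wdhg k V E w \<Longrightarrow> E' \<subseteq> E \<Longrightarrow> \<forall>e\<in>E'. w' e > 0 \<Longrightarrow> wdhg k V E' w'"
  unfolding wdhg_def by auto

lemma is_sparsifier_pullback_from_cover:
  assumes maps_Part: "\<forall>A\<in>Part r V. fP A \<in> Part r' (cover_vertices k V)"
    and preserves_Val: "\<forall>E0 w0. wdhg k V E0 w0 \<longrightarrow>
           (\<forall>A\<in>Part r V. Val E0 w0 P A = Val (cover_edges k E0) (cover_weight w0) P' (fP A))"
    and H: "wdhg k V E w"
    and sparse: "is_sparsifier r' P' eps (cover_vertices k V) (cover_edges k E) (cover_weight w) E' w'"
  shows "is_sparsifier r P eps V E w (map fst ` E') (w' \<circ> cover_edge k)"
proof -
  have len: "\<forall>e\<in>E. length e = k"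
    using H unfolding wdhg_def by auto
  have sub: "E' \<subseteq> cover_edges k E" and pos: "\<forall>e\<in>E'. w' e > 0"
    using sparse unfolding is_sparsifier_def by auto
  have sub_pullback: "map fst ` E' \<subseteq> E"
    using len sub cover_edge_map_fst(2) by blast
  have pos_pullback: "\<forall>e\<in>map fst ` E'. (w' \<circ> cover_edge k) e > 0"
    using pos sub by (auto simp: cover_edge_map_fst(1)[OF len] subset_iff)
  have H_pullback: "wdhg k V (map fst ` E') (w' \<circ> cover_edge k)"
    using wdhg_subhypergraph[OF H sub_pullback pos_pullback] .
  show ?thesis
    unfolding is_sparsifier_def
  proof (intro conjI ballI sub_pullback)
    fix e assume "e \<in> map fst ` E'"
    then show "(w' \<circ> cover_edge k) e > 0" using pos_pullback by blast
  next
    fix A assume A: "A \<in> Part r V"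
    have "Val E w P A = Val (cover_edges k E) (cover_weight w) P' (fP A)"
      using preserves_Val H A by blast
    moreover have "Val (map fst ` E') (w' \<circ> cover_edge k) P A = Val E' w' P' (fP A)"
      using preserves_Val H_pullback A cover_edges_image_map_fst[OF len sub]
        Val_cover_weight_comp_cover_edge[OF len sub] by metis
    moreover have "fP A \<in> Part r' (cover_vertices k V)"
      using maps_Part A by blast
    ultimately show "(1 - eps) * Val E w P A \<le> Val (map fst ` E') (w' \<circ> cover_edge k) P A"
      and "Val (map fst ` E') (w' \<circ> cover_edge k) P A \<le> (1 + eps) * Val E w P A"
      using sparse unfolding is_sparsifier_def by auto
  qed
qed

theorem proposition13:
  fixes k r r' :: nat
    and P P' :: "nat list \<Rightarrow> bool"
    and V :: "'v set"
    and fP :: "('v \<Rightarrow> nat) \<Rightarrow> ('v \<times> nat \<Rightarrow> nat)"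
    and E :: "'v list set" and w :: "'v list \<Rightarrow> real"
    and eps :: real and g :: "nat \<Rightarrow> nat"
  assumes "k \<ge> 2" and "r \<ge> 1" and "r' \<ge> 1"
    and "finite V"
    and "\<forall>A\<in>Part r V. fP A \<in> Part r' (cover_vertices k V)"
    and "\<forall>E0 w0. wdhg k V E0 w0 \<longrightarrow>
           (\<forall>A\<in>Part r V. Val E0 w0 P A = Val (cover_edges k E0) (cover_weight w0) P' (fP A))"
    and "wdhg k V E w"
    and "0 < eps" and "eps < 1"
    and "\<exists>E' w'. is_sparsifier r' P' eps (cover_vertices k V) (cover_edges k E) (cover_weight w) E' w'
                \<and> card E' = g (card V)"
  shows "\<exists>E' w'. is_sparsifier r P eps V E w E' w' \<and> card E' = g (card V)"
proof -
  obtain E' w' where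
    sparse: "is_sparsifier r' P' eps (cover_vertices k V) (cover_edges k E) (cover_weight w) E' w'"
    and size: "card E' = g (card V)"
    using assms(10) by blast
  have len: "\<forall>e\<in>E. length e = k"
    using assms(7) unfolding wdhg_def by auto
  have "E' \<subseteq> cover_edges k E"
    using sparse unfolding is_sparsifier_def by blast
  then have "card (map fst ` E') = card E'"
    using card_image inj_on_subset inj_on_map_fst_cover_edges[OF len] by metis
  moreover have "is_sparsifier r P eps V E w (map fst ` E') (w' \<circ> cover_edge k)"
    using is_sparsifier_pullback_from_cover[OF assms(5,6,7) sparse] .
  ultimately show ?thesis
    using size by metis
qed

end
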